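(* For every $t>0$ and all $\alpha,\beta\ge0$ with $\alpha+\beta\ge1$ or $\alpha+\beta\le\tfrac12$, $$(t^{1-\alpha-\beta}+1)^2\,(t^{2\alpha}-1)\,(t^{2\beta}-1)\ \ge\ 16\,\alpha\beta\,(t-1)^2.$$ *)

theory Defs
  imports Complex_Main
begin

end

theory Submission
  imports Defs
begin

text \<open>Writing \<open>t = exp (2 * u)\<close> and \<open>c = \<alpha> + \<beta>\<close>, both sides factor as \<open>16 * exp (2 * u)\<close> times
  a hyperbolic expression, and the claim becomes
  \<open>4 \<alpha> \<beta> sinh\<^sup>2 u \<le> cosh\<^sup>2 ((1 - c) u) sinh (2 \<alpha> u) sinh (2 \<beta> u)\<close>.
  Two facts about \<open>sinh\<close> on \<open>[0, \<infinity>)\<close> give this.  Since \<open>sinh x / x\<close> is increasing, the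
  product \<open>sinh x sinh y / (x y)\<close> is at least its value at the midpoint \<open>x = y = (x + y) / 2\<close>,
  i.e. \<open>4 \<alpha> \<beta> sinh\<^sup>2 (c u) \<le> c\<^sup>2 sinh (2 \<alpha> u) sinh (2 \<beta> u)\<close>.  And
  \<open>2 cosh ((1 - c) u) sinh (c u) = sinh u + sinh ((2 c - 1) u)\<close>, where convexity of \<open>sinh\<close>
  gives \<open>sinh ((2 c - 1) u) \<ge> (2 c - 1) sinh u\<close> exactly when \<open>c \<ge> 1\<close> or \<open>c \<le> 1/2\<close>; hence
  \<open>c sinh u \<le> cosh ((1 - c) u) sinh (c u)\<close>.  Combining the two and cancelling \<open>c\<^sup>2\<close> finishes.\<close>

lemma exp_double_minus_one: "exp (2 * x) - 1 = 2 * exp x * sinh (x::real)"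
  by (simp add: sinh_def exp_minus field_simps flip: exp_add)

lemma exp_double_plus_one: "exp (2 * x) + 1 = 2 * exp x * cosh (x::real)"
  by (simp add: cosh_def exp_minus field_simps flip: exp_add)

lemma sinh_add_mult_sinh_diff: "sinh (x + y) * sinh (x - y) = sinh x ^ 2 - sinh (y::real) ^ 2"
  by (simp add: sinh_add sinh_diff algebra_simps power2_eq_square[symmetric] cosh_square_eq)

lemma sinh_mult_le:
  fixes l x :: real
  assumes "0 \<le> l" "l \<le> 1" "0 \<le> x"
  shows "sinh (l * x) \<le> l * sinh x"
proof -
  let ?f = "\<lambda>x. l * sinh x - sinh (l * x)"
  have "?f 0 \<le> ?f x"
  proof (rule DERIV_nonneg_imp_nondecreasing[OF assms(3)])
    fix y :: real assume y: "0 \<le> y" "y \<le> x"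
    have "DERIV ?f y :> l * (cosh y - cosh (l * y))"
      by (auto intro!: derivative_eq_intros simp: algebra_simps)
    moreover have "cosh (l * y) \<le> cosh y"
      using y assms by (subst cosh_real_nonneg_le_iff) (auto simp: mult_left_le_one_le)
    ultimately show "\<exists>D. DERIV ?f y :> D \<and> D \<ge> 0"
      using assms by auto
  qed
  thus ?thesis by simp
qed

lemma sinh_mult_le_mult_sinh:
  fixes x y :: real
  assumes "0 \<le> x" "x \<le> y"
  shows "sinh x * y \<le> sinh y * x"
proof (cases "y = 0")
  case False
  with assms have "y > 0" by simp
  have "sinh ((x / y) * y) \<le> (x / y) * sinh y"
    using assms \<open>y > 0\<close> by (intro sinh_mult_le) auto
  with \<open>y > 0\<close> show ?thesis by (simp add: field_simps)
qed (use assms in simp)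

lemma mult_sinh_midpoint_le:
  fixes x y :: real
  assumes "0 \<le> x" "0 \<le> y"
  shows "x * y * sinh ((x + y) / 2) ^ 2 \<le> ((x + y) / 2) ^ 2 * sinh x * sinh y"
proof -
  define m d where "m = (x + y) / 2" and "d = (x - y) / 2"
  have "\<bar>d\<bar> \<le> m" unfolding m_def d_def using assms by auto
  then have "(sinh \<bar>d\<bar> * m) ^ 2 \<le> (sinh m * \<bar>d\<bar>) ^ 2"
    by (intro power_mono sinh_mult_le_mult_sinh) auto
  then have sq: "sinh d ^ 2 * m ^ 2 \<le> sinh m ^ 2 * d ^ 2"
    by (cases "d \<ge> 0") (auto simp: power_mult_distrib)
  have "x * y * sinh m ^ 2 = (m ^ 2 - d ^ 2) * sinh m ^ 2"
    unfolding m_def d_def by (simp add: field_simps power2_eq_square)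
  also have "\<dots> \<le> m ^ 2 * (sinh m ^ 2 - sinh d ^ 2)"
    using sq by (simp add: algebra_simps)
  also have "\<dots> = m ^ 2 * sinh (m + d) * sinh (m - d)"
    by (simp add: sinh_add_mult_sinh_diff)
  also have "\<dots> = m ^ 2 * sinh x * sinh y"
    unfolding m_def d_def by (simp add: field_simps)
  finally show ?thesis unfolding m_def .
qed

lemma sinh_mult_sinh_ge:
  fixes a b u :: real
  assumes "0 \<le> a" "0 \<le> b" "0 \<le> u"
  shows "4 * a * b * sinh ((a + b) * u) ^ 2 \<le> (a + b) ^ 2 * sinh (2 * a * u) * sinh (2 * b * u)"
proof (cases "u = 0")
  case False
  have "(2 * a * u) * (2 * b * u) * sinh ((2 * a * u + 2 * b * u) / 2) ^ 2
        \<le> ((2 * a * u + 2 * b * u) / 2) ^ 2 * sinh (2 * a * u) * sinh (2 * b * u)"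
    using assms by (intro mult_sinh_midpoint_le) auto
  also have "(2 * a * u + 2 * b * u) / 2 = (a + b) * u"
    by (simp add: algebra_simps)
  finally have "u ^ 2 * (4 * a * b * sinh ((a + b) * u) ^ 2)
                \<le> u ^ 2 * ((a + b) ^ 2 * sinh (2 * a * u) * sinh (2 * b * u))"
    by (simp add: power2_eq_square algebra_simps)
  with False show ?thesis by simp
qed simp

lemma mult_sinh_le_cosh_mult_sinh:
  fixes c u :: real
  assumes "0 \<le> c" "c \<ge> 1 \<or> c \<le> 1/2" "0 \<le> u"
  shows "c * sinh u \<le> cosh ((1 - c) * u) * sinh (c * u)"
proof -
  have sum: "2 * (cosh ((1 - c) * u) * sinh (c * u)) = sinh u + sinh ((2 * c - 1) * u)"
    using sinh_add[of "(1 - c) * u" "c * u"] sinh_diff[of "c * u" "(1 - c) * u"]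
    by (simp add: algebra_simps)
  have "(2 * c - 1) * sinh u \<le> sinh ((2 * c - 1) * u)"
    using assms(2)
  proof
    assume "c \<ge> 1"
    then have "sinh ((1 / (2 * c - 1)) * ((2 * c - 1) * u)) \<le> (1 / (2 * c - 1)) * sinh ((2 * c - 1) * u)"
      using assms by (intro sinh_mult_le) auto
    also have "(1 / (2 * c - 1)) * ((2 * c - 1) * u) = u"
      using \<open>c \<ge> 1\<close> by simp
    finally show ?thesis
      using \<open>c \<ge> 1\<close> by (simp add: field_simps)
  next
    assume "c \<le> 1/2"
    then have "sinh ((1 - 2 * c) * u) \<le> (1 - 2 * c) * sinh u"
      using assms by (intro sinh_mult_le) auto
    moreover have "sinh ((2 * c - 1) * u) = - sinh ((1 - 2 * c) * u)"
      by (metis minus_diff_eq mult_minus_left sinh_minus)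
    ultimately show ?thesis by (simp add: algebra_simps)
  qed
  with sum show ?thesis by (simp add: algebra_simps)
qed

lemma hyperbolic_form_nonneg:
  fixes a b u :: real
  assumes "0 \<le> a" "0 \<le> b" "a + b \<ge> 1 \<or> a + b \<le> 1/2" "0 \<le> u"
  shows "4 * a * b * sinh u ^ 2 \<le> cosh ((1 - a - b) * u) ^ 2 * sinh (2 * a * u) * sinh (2 * b * u)"
proof (cases "a + b = 0")
  case False
  define c where "c = a + b"
  with False assms have "c > 0" by simp
  have "c * sinh u \<le> cosh ((1 - c) * u) * sinh (c * u)"
    using assms \<open>c > 0\<close> unfolding c_def by (intro mult_sinh_le_cosh_mult_sinh) auto
  then have "(c * sinh u) ^ 2 \<le> (cosh ((1 - c) * u) * sinh (c * u)) ^ 2"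
    using \<open>c > 0\<close> assms by (intro power_mono) auto
  then have "c ^ 2 * (4 * a * b * sinh u ^ 2)
             \<le> cosh ((1 - c) * u) ^ 2 * (4 * a * b * sinh (c * u) ^ 2)"
    using assms by (simp add: power_mult_distrib mult_left_mono algebra_simps)
  also have "\<dots> \<le> cosh ((1 - c) * u) ^ 2 * (c ^ 2 * sinh (2 * a * u) * sinh (2 * b * u))"
    unfolding c_def using assms by (intro mult_left_mono sinh_mult_sinh_ge) auto
  finally show ?thesis
    using \<open>c > 0\<close> unfolding c_def by (simp add: algebra_simps)
next
  case True
  with assms have "a = 0" by simp
  then show ?thesis by simp
qed

lemma hyperbolic_form:
  fixes a b u :: real
  assumes "0 \<le> a" "0 \<le> b" "a + b \<ge> 1 \<or> a + b \<le> 1/2"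
  shows "4 * a * b * sinh u ^ 2 \<le> cosh ((1 - a - b) * u) ^ 2 * sinh (2 * a * u) * sinh (2 * b * u)"
proof (cases "u \<ge> 0")
  case False
  have "4 * a * b * sinh (- u) ^ 2
        \<le> cosh ((1 - a - b) * - u) ^ 2 * sinh (2 * a * - u) * sinh (2 * b * - u)"
    using assms False by (intro hyperbolic_form_nonneg) auto
  then show ?thesis by simp
qed (use assms hyperbolic_form_nonneg in blast)

theorem lemma3p3:
  fixes t \<alpha> \<beta> :: real
  assumes "t > 0" and "\<alpha> \<ge> 0" and "\<beta> \<ge> 0"
    and "\<alpha> + \<beta> \<ge> 1 \<or> \<alpha> + \<beta> \<le> 1/2"
  shows "(t powr (1 - \<alpha> - \<beta>) + 1)\<^sup>2 * (t powr (2*\<alpha>) - 1) * (t powr (2*\<beta>) - 1)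
           \<ge> 16 * \<alpha> * \<beta> * (t - 1)\<^sup>2"
proof -
  define u g where "u = ln t / 2" and "g = 1 - \<alpha> - \<beta>"
  have powr: "t powr z = exp (2 * (z * u))" for z
    unfolding u_def powr_def using assms by simp
  have "t - 1 = 2 * exp u * sinh u"
    using powr[of 1] assms by (simp add: exp_double_minus_one)
  then have "16 * \<alpha> * \<beta> * (t - 1)\<^sup>2 = 16 * exp (2 * u) * (4 * \<alpha> * \<beta> * sinh u ^ 2)"
    by (simp add: power_mult_distrib power2_eq_square algebra_simps flip: exp_add)
  also have "\<dots> \<le> 16 * exp (2 * u) * (cosh (g * u) ^ 2 * sinh (2 * \<alpha> * u) * sinh (2 * \<beta> * u))"
    using hyperbolic_form[OF assms(2-4)] unfolding g_def by (intro mult_left_mono) auto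
  also have "\<dots> = (t powr g + 1)\<^sup>2 * (t powr (2*\<alpha>) - 1) * (t powr (2*\<beta>) - 1)"
    unfolding powr exp_double_minus_one exp_double_plus_one
    by (simp add: g_def power_mult_distrib power2_eq_square algebra_simps flip: exp_add)
  finally show ?thesis unfolding g_def .
qed

end
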